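(* Let $f(x,y)=\left(x+\frac1y,\ y-\frac1y-x\right)$ be the Hénon–Devaney map. For $n\ge1$ let $U_n$ be the set of $t\in\mathbb{R}$ such that $f^{k}(t,-t)$ is defined and does not lie on $\{y=0\}$ for every $k=0,1,\dots,n-1$ (so that $f^{n}(t,-t)$ is defined), and write $f^{n}(t,-t)=(f^n_x(t,-t),f^n_y(t,-t))$. Then for every $n\ge1$: (a) on each connected component of $U_n$, $t\mapsto f^n_x(t,-t)$ is increasing and $t\mapsto f^n_y(t,-t)$ is decreasing; (b) $f^{n-1}(\{y=-x\})\cap f^{n}(\{y=-x\})=\emptyset$, where $f^{k}(\{y=-x\})=\{f^k(t,-t):t\in U_k\}$ for $k\ge1$ and $f^0(\{y=-x\})=\{y=-x\}$. *)

theory Defs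
  imports "HOL-Analysis.Analysis"
begin

text \<open>It is only meaningful
  for y \<noteq> 0; Isabelle's total division is harmless because we only ever evaluate
  iterates at parameters in U n, where all intermediate y-coordinates are nonzero.\<close>
definition henon :: "real \<times> real \<Rightarrow> real \<times> real" where
  "henon p = (fst p + 1 / snd p, snd p - 1 / snd p - fst p)"

definition U :: "nat \<Rightarrow> real set" where
  "U n = {t. \<forall>k<n. snd ((henon ^^ k) (t, -t)) \<noteq> 0}"

definition line_image :: "nat \<Rightarrow> (real \<times> real) set" where
  "line_image n = (\<lambda>t. (henon ^^ n) (t, -t)) ` U n"

end

theory Submission
  imports Defs
begin

text \<open>Part (a): along a component of U n none of the y-coordinates of the first n iterates
  vanishes, so by connectedness each keeps a constant sign. On either half-line 1/y is
  decreasing, hence if x increases and y decreases along the component, so does x + 1/y,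
  while y - 1/y - x decreases; induction on the number of iterates gives the claim.

  Part (b): the sum of the coordinates of f(x,y) is y, so f is injective off the line
  y = 0, and f(t,-t) has coordinate sum -t \<noteq> 0, so it misses the line y = -x. Cancelling
  f from an equation f^m(s,-s) = f^(m+1)(t,-t) step by step reduces it to this case.\<close>

lemma U_antimono: "m \<le> n \<Longrightarrow> U n \<subseteq> U m"
  unfolding U_def by auto

lemma henon_coordinate_sum: "fst (henon p) + snd (henon p) = snd p"
  by (simp add: henon_def)

lemma inj_on_henon: "inj_on henon {p. snd p \<noteq> 0}"
proof (rule inj_onI)
  fix p q :: "real \<times> real"
  assume "p \<in> {p. snd p \<noteq> 0}" "q \<in> {p. snd p \<noteq> 0}" and eq: "henon p = henon q"
  then have "snd p = snd q"
    by (metis henon_coordinate_sum)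
  moreover from eq have "fst p + 1 / snd p = fst q + 1 / snd q"
    by (simp add: henon_def prod_eq_iff)
  ultimately show "p = q"
    by (simp add: prod_eq_iff)
qed

lemma henon_strict_mono_step:
  assumes "0 < snd p * snd q" "fst p < fst q" "snd q < snd p"
  shows "fst (henon p) < fst (henon q) \<and> snd (henon q) < snd (henon p)"
proof -
  have "1 / snd p < 1 / snd q"
    using assms(1,3) by (auto simp: zero_less_mult_iff divide_simps)
  then show ?thesis
    using assms(2,3) by (simp add: henon_def)
qed

lemma connected_nonzero_same_sign:
  fixes g :: "'a::topological_space \<Rightarrow> real"
  assumes "connected C" "continuous_on C g" "\<And>x. x \<in> C \<Longrightarrow> g x \<noteq> 0"
    and "s \<in> C" "t \<in> C"
  shows "0 < g s * g t"
proof (rule ccontr)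
  assume "\<not> 0 < g s * g t"
  then have "min (g s) (g t) \<le> 0" "0 \<le> max (g s) (g t)"
    by (auto simp: zero_less_mult_iff)
  moreover have "connected (g ` C)"
    using assms(2,1) by (rule connected_continuous_image)
  moreover have "min (g s) (g t) \<in> g ` C" "max (g s) (g t) \<in> g ` C"
    using assms(4,5) by (simp_all add: min_def max_def)
  ultimately have "0 \<in> g ` C"
    by (meson connectedD_interval)
  then show False
    using assms(3) by auto
qed

lemma continuous_on_henon_line_iterate:
  "k \<le> n \<Longrightarrow> continuous_on (U n) (\<lambda>t. (henon ^^ k) (t, -t))"
proof (induction k)
  case 0
  then show ?case
    by (simp add: continuous_on_Pair continuous_on_minus)
next
  case (Suc k)
  have "\<And>t. t \<in> U n \<Longrightarrow> snd ((henon ^^ k) (t, -t)) \<noteq> 0"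
    using Suc.prems by (auto simp: U_def)
  with Suc have "continuous_on (U n) (\<lambda>t. henon ((henon ^^ k) (t, -t)))"
    unfolding henon_def by (intro continuous_intros) auto
  then show ?case
    by simp
qed

lemma henon_line_iterate_strict_mono_on_component:
  assumes "C \<in> components (U n)" "s \<in> C" "t \<in> C" "s < t" "k \<le> n"
  shows "fst ((henon ^^ k) (s, -s)) < fst ((henon ^^ k) (t, -t)) \<and>
         snd ((henon ^^ k) (t, -t)) < snd ((henon ^^ k) (s, -s))"
  using assms(5)
proof (induction k)
  case 0
  then show ?case
    using assms(4) by simp
next
  case (Suc k)
  have "C \<subseteq> U n" "connected C"
    using assms(1) in_components_subset in_components_connected by auto
  moreover have "continuous_on (U n) (\<lambda>t. snd ((henon ^^ k) (t, -t)))"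
    using continuous_on_henon_line_iterate[of k n] Suc.prems
    by (intro continuous_intros) auto
  ultimately have "0 < snd ((henon ^^ k) (s, -s)) * snd ((henon ^^ k) (t, -t))"
    using Suc.prems assms(2,3)
    by (intro connected_nonzero_same_sign[where C = C])
       (auto simp: U_def intro: continuous_on_subset)
  with Suc show ?case
    using henon_strict_mono_step by simp
qed

lemma line_image_disjoint_Suc: "line_image m \<inter> line_image (Suc m) = {}"
proof (induction m)
  case 0
  have "(t, -t) \<noteq> henon (s, -s)" if "s \<noteq> 0" for s t :: real
  proof
    assume "(t, -t) = henon (s, -s)"
    then have "t + -t = -s"
      using henon_coordinate_sum[of "(s, -s)"] by (metis fst_conv snd_conv)
    with that show False
      by simp
  qed
  then show ?case
    by (auto simp: line_image_def U_def)
next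
  case (Suc m)
  show ?case
  proof (rule ccontr)
    assume "line_image (Suc m) \<inter> line_image (Suc (Suc m)) \<noteq> {}"
    then obtain s t where s: "s \<in> U (Suc m)" and t: "t \<in> U (Suc (Suc m))"
      and "(henon ^^ Suc m) (s, -s) = (henon ^^ Suc (Suc m)) (t, -t)"
      unfolding line_image_def by blast
    then have "henon ((henon ^^ m) (s, -s)) = henon ((henon ^^ Suc m) (t, -t))"
      by simp
    moreover have "(henon ^^ m) (s, -s) \<in> {p. snd p \<noteq> 0}"
      using s by (simp add: U_def)
    moreover have "(henon ^^ Suc m) (t, -t) \<in> {p. snd p \<noteq> 0}"
      using t unfolding U_def by blast
    ultimately have eq: "(henon ^^ m) (s, -s) = (henon ^^ Suc m) (t, -t)"
      by (rule inj_onD[OF inj_on_henon])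
    have "(henon ^^ m) (s, -s) \<in> line_image m"
      unfolding line_image_def using s U_antimono[of m "Suc m"] by auto
    moreover have "(henon ^^ Suc m) (t, -t) \<in> line_image (Suc m)"
      unfolding line_image_def using t U_antimono[of "Suc m" "Suc (Suc m)"]
      by (auto simp del: funpow.simps)
    ultimately show False
      using Suc.IH unfolding eq by blast
  qed
qed

theorem mainTheorem5:
  fixes n :: nat
  assumes "n \<ge> 1"
  shows "(\<forall>C \<in> components (U n). \<forall>s\<in>C. \<forall>t\<in>C. s < t \<longrightarrow>
            fst ((henon ^^ n) (s, -s)) < fst ((henon ^^ n) (t, -t)) \<and>
            snd ((henon ^^ n) (s, -s)) > snd ((henon ^^ n) (t, -t)))
       \<and> line_image (n - 1) \<inter> line_image n = {}"
proof
  show "\<forall>C \<in> components (U n). \<forall>s\<in>C. \<forall>t\<in>C. s < t \<longrightarrow>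
            fst ((henon ^^ n) (s, -s)) < fst ((henon ^^ n) (t, -t)) \<and>
            snd ((henon ^^ n) (s, -s)) > snd ((henon ^^ n) (t, -t))"
    using henon_line_iterate_strict_mono_on_component[of _ n _ _ n] by simp
  from assms obtain m where "n = Suc m"
    by (cases n) auto
  then show "line_image (n - 1) \<inter> line_image n = {}"
    using line_image_disjoint_Suc[of m] by (simp only: diff_Suc_1)
qed

end
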